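(* For all $w_1\in\mathcal{H}^0$ and $w_2\in\mathcal{H}^{\ge2}$, $Z^\diamondsuit(w_1*w_2)=Z^\diamondsuit(w_1)Z^\diamondsuit(w_2)$ (termwise product in $\mathbb{Q}^{\mathbb{N}}$).
   Context: $[n]=\{1,\dots,n\}$. For $N\ge1$ and an admissible index (tuple of positive integers, nonempty, last entry $\ge2$) $\boldsymbol{k}=(k_1,\dots,k_r)$: $[r]^1_{\boldsymbol{k}}=\{i:k_i=1\}$, $S_{r,N}(A)=\{(n_1,\dots,n_r)\in[N-1]^r: n_i\le n_{i+1}\ (i\in A),\ n_i<n_{i+1}\ (i\in[r-1]\setminus A)\}$, $\zeta^\diamondsuit_N(\boldsymbol{k})=\sum_{A\subset[r]^1_{\boldsymbol{k}}}\sum_{S_{r,N}(A)}\prod_{i\in A}(N-n_i)^{-1}\prod_{i\notin A}n_i^{-k_i}$, $\zeta^\diamondsuit(\boldsymbol{k})=(\zeta^\diamondsuit_N(\boldsymbol{k}))_{N\ge1}$. $\mathcal{H}=\mathbb{Q}\langle x,y\rangle$, $\mathcal{H}^1=\mathbb{Q}+y\mathcal{H}$, $\mathcal{H}^0=\mathbb{Q}+y\mathcal{H}x$, $\mathcal{H}^{\ge2}=\mathbb{Q}+yx\,\mathbb{Q}\langle x,yx\rangle$, $e_k=yx^{k-1}$; $Z^\diamondsuit\colon\mathcal{H}^0\to\mathbb{Q}^{\mathbb{N}}$ is $\mathbb{Q}$-linear with $Z^\diamondsuit(1)=(1)_N$, $Z^\diamondsuit(e_{k_1}\cdots e_{k_r})=\zeta^\diamondsuit(k_1,\dots,k_r)$.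 Harmonic product $*$ on $\mathcal{H}^1$: $\mathbb{Q}$-bilinear, $w*1=1*w=w$, $w_1e_{k_1}*w_2e_{k_2}=(w_1*w_2e_{k_2})e_{k_1}+(w_1e_{k_1}*w_2)e_{k_2}+(w_1*w_2)e_{k_1+k_2}$ for words $w_1,w_2$. *)

theory Defs
  imports Complex_Main "HOL-Library.FuncSet"
begin

datatype letter = X | Y

type_synonym hword = "letter list"
type_synonym helem = "hword \<Rightarrow> rat"   \<comment> \<open>coefficient function of a noncommutative polynomial\<close>

definition supp :: "helem \<Rightarrow> hword set" where
  "supp f = {w. f w \<noteq> 0}"

definition Hset :: "helem set" where
  "Hset = {f. finite (supp f)}"

definition H1 :: "helem set" where
  "H1 = {f \<in> Hset. \<forall>w \<in> supp f. w = [] \<or> (\<exists>u. w = Y # u)}"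

definition H0 :: "helem set" where
  "H0 = {f \<in> Hset. \<forall>w \<in> supp f. w = [] \<or> (\<exists>u. w = Y # u @ [X])}"

text \<open>H^{>=2} = Q + yx Q<x,yx>: words are empty or yx followed by a word in the letters x and yx.\<close>
definition H2 :: "helem set" where
  "H2 = {f \<in> Hset. \<forall>w \<in> supp f. w = [] \<or>
          (\<exists>us. (\<forall>u \<in> set us. u = [X] \<or> u = [Y, X]) \<and> w = [Y, X] @ concat us)}"

definition ek :: "nat \<Rightarrow> hword" where
  "ek k = Y # replicate (k - 1) X"

definition idx_word :: "nat list \<Rightarrow> hword" where
  "idx_word ks = concat (map ek ks)"

definition widx :: "hword \<Rightarrow> nat list" where
  "widx w = (THE ks. (\<forall>k \<in> set ks. 0 < k) \<and> idx_word ks = w)"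

definition delta :: "hword \<Rightarrow> helem" where
  "delta w = (\<lambda>v. if v = w then 1 else 0)"

definition rmul :: "helem \<Rightarrow> hword \<Rightarrow> helem" where
  "rmul f u = (\<lambda>w. if (\<exists>v. w = v @ u) then f (take (length w - length u) w) else 0)"

text \<open>Harmonic product of two words e_{..}, given by their reversed indices
  (so that the head of the list is the last letter e_k).\<close>
fun hrev :: "nat list \<Rightarrow> nat list \<Rightarrow> helem" where
  "hrev [] b = delta (idx_word (rev b))"
| "hrev (k1 # a) [] = delta (idx_word (rev (k1 # a)))"
| "hrev (k1 # a) (k2 # b) =
     (\<lambda>w. rmul (hrev a (k2 # b)) (ek k1) w + rmul (hrev (k1 # a) b) (ek k2) w
          + rmul (hrev a b) (ek (k1 + k2)) w)"

definition harm :: "helem \<Rightarrow> helem \<Rightarrow> helem" where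
  "harm f g = (\<lambda>w. \<Sum>u \<in> supp f. \<Sum>v \<in> supp g.
      f u * g v * hrev (rev (widx u)) (rev (widx v)) w)"

text \<open>Index k = (k_1,...,k_r) is a list, k_i = ks ! (i-1); tuples (n_1,...,n_r) are
  extensional functions on {1..r}.\<close>
definition Sset :: "nat \<Rightarrow> nat \<Rightarrow> nat set \<Rightarrow> (nat \<Rightarrow> nat) set" where
  "Sset r N A = {n \<in> {1..r} \<rightarrow>\<^sub>E {1..N-1}.
      \<forall>i \<in> {1..r-1}. (i \<in> A \<longrightarrow> n i \<le> n (Suc i)) \<and> (i \<notin> A \<longrightarrow> n i < n (Suc i))}"

definition zetaD_N :: "nat list \<Rightarrow> nat \<Rightarrow> rat" where
  "zetaD_N ks N = (let r = length ks; k = (\<lambda>i. ks ! (i - 1)) in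
     \<Sum>A \<in> Pow {i \<in> {1..r}. k i = 1}. \<Sum>n \<in> Sset r N A.
        (\<Prod>i \<in> A. 1 / of_nat (N - n i)) * (\<Prod>i \<in> {1..r} - A. 1 / of_nat (n i) ^ k i))"

definition zetaD :: "nat list \<Rightarrow> (nat \<Rightarrow> rat)" where
  "zetaD ks = (\<lambda>N. zetaD_N ks N)"

definition Zword :: "hword \<Rightarrow> (nat \<Rightarrow> rat)" where
  "Zword w = (if w = [] then (\<lambda>N. 1) else zetaD (widx w))"

definition ZD :: "helem \<Rightarrow> (nat \<Rightarrow> rat)" where
  "ZD f = (\<lambda>N. \<Sum>w \<in> supp f. f w * Zword w N)"

end

(*
  Read from its last entry, zeta^diamond_N(k_1,...,k_r) is an iterated sum: the outermost layer,
  for k = k_r, sums the weight n^(-k), and when k = 1 also the weight (N - n)^(-1), times the inner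
  iterated sum truncated at n.  Multiplying two such sums and splitting according to whether the
  outermost variable of the first factor is smaller than, larger than or equal to that of the
  second gives exactly the three terms of the recursion of the harmonic product, as for the
  stuffle relation of truncated multiple zeta values.  The additional (N - n)^(-1) layer spoils
  this splitting unless it only occurs in the first factor, which is why all indices of the second
  factor must be at least 2, i.e. it must lie in H^{>=2}.
*)
theory Submission
  imports Defs
begin

section \<open>Truncated zeta^diamond values as iterated sums\<close>

definition iter_sum :: "nat \<Rightarrow> nat \<Rightarrow> (nat \<Rightarrow> rat) \<Rightarrow> nat \<Rightarrow> rat" where
  "iter_sum N k f m = (\<Sum>n\<in>{1..<m}. 1 / of_nat n ^ k * f n)
     + (if k = 1 then (\<Sum>n\<in>{1..min m (N-1)}. 1 / of_nat (N - n) * f n) else 0)"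

text \<open>The index is given reversed, so that its head is the outermost summation layer.\<close>
fun zetaD_trunc :: "nat \<Rightarrow> nat list \<Rightarrow> nat \<Rightarrow> rat" where
  "zetaD_trunc N [] m = 1"
| "zetaD_trunc N (k # ks) m = iter_sum N k (zetaD_trunc N ks) m"

lemma iter_sum_0 [simp]: "iter_sum N k f 0 = 0"
  by (simp add: iter_sum_def)

lemma iter_sum_Suc:
  "iter_sum N k f (Suc m) = iter_sum N k f m + (if 1 \<le> m then 1 / of_nat m ^ k * f m else 0)
     + (if k = 1 \<and> Suc m \<le> N - 1 then 1 / of_nat (N - Suc m) * f (Suc m) else 0)"
proof -
  have lower: "(\<Sum>n\<in>{1..<Suc m}. 1 / of_nat n ^ k * f n)
      = (\<Sum>n\<in>{1..<m}. 1 / of_nat n ^ k * f n) + (if 1 \<le> m then 1 / of_nat m ^ k * f m else 0)"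
    by (cases m) (auto simp: sum.atLeastLessThan_Suc)
  have upper: "(\<Sum>n\<in>{1..min (Suc m) (N-1)}. 1 / of_nat (N - n) * f n)
      = (\<Sum>n\<in>{1..min m (N-1)}. 1 / of_nat (N - n) * f n)
        + (if Suc m \<le> N - 1 then 1 / of_nat (N - Suc m) * f (Suc m) else 0)"
  proof (cases "Suc m \<le> N - 1")
    case True
    then have "min (Suc m) (N-1) = Suc m" "min m (N-1) = m" by auto
    with True show ?thesis by simp
  next
    case False
    then have "min (Suc m) (N-1) = min m (N-1)" by auto
    with False show ?thesis by simp
  qed
  show ?thesis unfolding iter_sum_def using lower upper by auto
qed

lemma iter_sum_add: "iter_sum N k (\<lambda>n. f n + g n) m = iter_sum N k f m + iter_sum N k g m"
  by (simp add: iter_sum_def sum.distrib distrib_left)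

lemma iter_sum_sum_list:
  "sum_list (map (\<lambda>c. iter_sum N k (g c) m) cs) = iter_sum N k (\<lambda>n. sum_list (map (\<lambda>c. g c n) cs)) m"
  by (induction cs) (simp_all add: iter_sum_add, simp add: iter_sum_def)

lemma iter_sum_cong:
  "(\<And>j. j \<le> N \<Longrightarrow> f j = g j) \<Longrightarrow> m \<le> N \<Longrightarrow> iter_sum N k f m = iter_sum N k g m"
  unfolding iter_sum_def by (auto intro!: sum.cong arg_cong2[where f="(+)"])

text \<open>The three terms correspond to the outermost variable of the first factor being smaller than,
  larger than, or equal to that of the second.\<close>
lemma iter_sum_mult:
  assumes "k2 \<noteq> 1" "k1 + k2 \<noteq> 1"
  shows "iter_sum N k1 f m * iter_sum N k2 g m
     = iter_sum N k1 (\<lambda>n. f n * iter_sum N k2 g n) m + iter_sum N k2 (\<lambda>n. iter_sum N k1 f n * g n) m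
       + iter_sum N (k1 + k2) (\<lambda>n. f n * g n) m"
proof (induction m)
  case 0
  then show ?case by simp
next
  case (Suc m)
  let ?F = "iter_sum N k1 f" and ?G = "iter_sum N k2 g"
  let ?f = "\<lambda>n. if 1 \<le> n then 1 / of_nat n ^ k1 * f n else 0"
  let ?g = "\<lambda>n. if 1 \<le> n then 1 / of_nat n ^ k2 * g n else 0"
  let ?e = "if k1 = 1 \<and> Suc m \<le> N - 1 then 1 / of_nat (N - Suc m) * f (Suc m) else 0"
  have "?F (Suc m) = ?F m + ?f m + ?e"
    by (simp add: iter_sum_Suc)
  moreover have "?G (Suc m) = ?G m + ?g m"
    using assms by (simp add: iter_sum_Suc)
  moreover have "iter_sum N k1 (\<lambda>n. f n * ?G n) (Suc m)
      = iter_sum N k1 (\<lambda>n. f n * ?G n) m + ?f m * ?G m + ?e * ?G (Suc m)"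
    by (simp add: iter_sum_Suc)
  moreover have "iter_sum N k2 (\<lambda>n. ?F n * g n) (Suc m) = iter_sum N k2 (\<lambda>n. ?F n * g n) m + ?F m * ?g m"
    using assms by (simp add: iter_sum_Suc)
  moreover have "iter_sum N (k1 + k2) (\<lambda>n. f n * g n) (Suc m)
      = iter_sum N (k1 + k2) (\<lambda>n. f n * g n) m + ?f m * ?g m"
    using assms by (simp add: iter_sum_Suc power_add)
  ultimately show ?case
    using Suc.IH by (cases "1 \<le> m") (simp_all add: algebra_simps)
qed

text \<open>The harmonic product of two words, on reversed indices, as a list of indices with
  multiplicities.\<close>
fun stuffle :: "nat list \<Rightarrow> nat list \<Rightarrow> nat list list" where
  "stuffle [] b = [b]"
| "stuffle (k1 # a) [] = [k1 # a]"
| "stuffle (k1 # a) (k2 # b) = map (Cons k1) (stuffle a (k2 # b)) @ map (Cons k2) (stuffle (k1 # a) b)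
     @ map (Cons (k1 + k2)) (stuffle a b)"

lemma zetaD_trunc_stuffle:
  assumes "\<forall>k\<in>set b. 2 \<le> k"
  shows "sum_list (map (\<lambda>c. zetaD_trunc N c m) (stuffle a b)) = zetaD_trunc N a m * zetaD_trunc N b m"
  using assms
proof (induction a b arbitrary: m rule: stuffle.induct)
  case (3 k1 a k2 b)
  have "k2 \<noteq> 1" "k1 + k2 \<noteq> 1" using "3.prems" by auto
  with "3" show ?case
    by (simp add: o_def iter_sum_sum_list iter_sum_mult)
qed simp_all

lemma stuffle_pos:
  "\<forall>k\<in>set a. 0 < k \<Longrightarrow> \<forall>k\<in>set b. 0 < k \<Longrightarrow> \<forall>c\<in>set (stuffle a b). \<forall>k\<in>set c. 0 < (k::nat)"
proof (induction a b rule: stuffle.induct)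
  case (3 k1 a k2 b)
  have pos: "\<forall>k\<in>set a. 0 < k" "\<forall>k\<in>set b. 0 < k" "0 < k1" "0 < k2" using "3.prems" by auto
  have "\<forall>c\<in>set (stuffle a (k2 # b)). \<forall>k\<in>set c. 0 < k" using "3.IH"(1) "3.prems" pos by blast
  moreover have "\<forall>c\<in>set (stuffle (k1 # a) b). \<forall>k\<in>set c. 0 < k" using "3.IH"(2) "3.prems" pos by blast
  moreover have "\<forall>c\<in>set (stuffle a b). \<forall>k\<in>set c. 0 < k" using "3.IH"(3) pos by blast
  ultimately show ?case using pos unfolding stuffle.simps set_append set_map by auto
qed simp_all

section \<open>The defining sum of zeta^diamond_N as an iterated sum\<close>

definition zetaD_term :: "nat \<Rightarrow> nat list \<Rightarrow> nat set \<Rightarrow> (nat \<Rightarrow> nat) \<Rightarrow> rat" where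
  "zetaD_term N ks A n = (\<Prod>i\<in>A. 1 / of_nat (N - n i))
     * (\<Prod>i\<in>{1..length ks} - A. 1 / of_nat (n i) ^ (ks ! (i - 1)))"

text \<open>The tuples of \<^const>\<open>Sset\<close> constrained as if n_{r+1} = m were appended.\<close>
definition Sset_upto :: "nat \<Rightarrow> nat \<Rightarrow> nat \<Rightarrow> nat set \<Rightarrow> (nat \<Rightarrow> nat) set" where
  "Sset_upto N r m A = {n \<in> Sset r N A. 0 < r \<longrightarrow> (r \<in> A \<longrightarrow> n r \<le> m) \<and> (r \<notin> A \<longrightarrow> n r < m)}"

definition zetaD_upto_part :: "nat \<Rightarrow> nat list \<Rightarrow> nat set \<Rightarrow> nat \<Rightarrow> rat" where
  "zetaD_upto_part N ks A m = (\<Sum>n\<in>Sset_upto N (length ks) m A. zetaD_term N ks A n)"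

definition zetaD_upto :: "nat \<Rightarrow> nat list \<Rightarrow> nat \<Rightarrow> rat" where
  "zetaD_upto N ks m = (\<Sum>A\<in>Pow {i \<in> {1..length ks}. ks ! (i - 1) = 1}. zetaD_upto_part N ks A m)"

lemma finite_Sset_upto: "finite (Sset_upto N r m A)"
proof (rule finite_subset)
  show "Sset_upto N r m A \<subseteq> {1..r} \<rightarrow>\<^sub>E {1..N-1}" by (auto simp: Sset_upto_def Sset_def)
qed (simp add: finite_PiE)

lemma Sset_upto_Suc:
  fixes N r m :: nat
  assumes "B - {Suc r} = A" "B \<subseteq> {1..Suc r}"
  defines "J \<equiv> {j\<in>{1..N-1}. (Suc r \<in> B \<longrightarrow> j \<le> m) \<and> (Suc r \<notin> B \<longrightarrow> j < m)}"
  shows "Sset_upto N (Suc r) m B = (\<lambda>(j, n). n(Suc r := j)) ` (SIGMA j:J. Sset_upto N r j A)"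
proof (intro equalityI subsetI)
  have B_iff: "i \<le> r \<Longrightarrow> i \<in> B \<longleftrightarrow> i \<in> A" for i using assms by auto
  fix x assume x: "x \<in> Sset_upto N (Suc r) m B"
  have x_PiE: "x \<in> {1..Suc r} \<rightarrow>\<^sub>E {1..N-1}"
    and x_chain: "\<forall>i\<in>{1..r}. (i \<in> B \<longrightarrow> x i \<le> x (Suc i)) \<and> (i \<notin> B \<longrightarrow> x i < x (Suc i))"
    and x_last: "(Suc r \<in> B \<longrightarrow> x (Suc r) \<le> m) \<and> (Suc r \<notin> B \<longrightarrow> x (Suc r) < m)"
    using x by (auto simp: Sset_upto_def Sset_def)
  have "x(Suc r := undefined) \<in> Sset_upto N r (x (Suc r)) A"
    using x_PiE x_chain B_iff
    by (auto simp: Sset_upto_def Sset_def PiE_iff extensional_def)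
  moreover have "x (Suc r) \<in> J"
    using x_PiE x_last unfolding J_def by (auto simp: PiE_iff)
  ultimately show "x \<in> (\<lambda>(j, n). n(Suc r := j)) ` (SIGMA j:J. Sset_upto N r j A)"
    by (force intro: image_eqI[where x="(x (Suc r), x(Suc r := undefined))"])
next
  have B_iff: "i \<le> r \<Longrightarrow> i \<in> B \<longleftrightarrow> i \<in> A" for i using assms by auto
  fix x assume "x \<in> (\<lambda>(j, n). n(Suc r := j)) ` (SIGMA j:J. Sset_upto N r j A)"
  then obtain j n where x: "x = n(Suc r := j)" and j: "j \<in> J" and n: "n \<in> Sset_upto N r j A"
    by auto
  have n_PiE: "n \<in> {1..r} \<rightarrow>\<^sub>E {1..N-1}"
    and n_chain: "\<forall>i\<in>{1..r-1}. (i \<in> A \<longrightarrow> n i \<le> n (Suc i)) \<and> (i \<notin> A \<longrightarrow> n i < n (Suc i))"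
    and n_last: "0 < r \<longrightarrow> (r \<in> A \<longrightarrow> n r \<le> j) \<and> (r \<notin> A \<longrightarrow> n r < j)"
    using n by (auto simp: Sset_upto_def Sset_def)
  have "\<forall>i\<in>{1..r}. (i \<in> B \<longrightarrow> x i \<le> x (Suc i)) \<and> (i \<notin> B \<longrightarrow> x i < x (Suc i))"
  proof
    fix i assume "i \<in> {1..r}"
    then show "(i \<in> B \<longrightarrow> x i \<le> x (Suc i)) \<and> (i \<notin> B \<longrightarrow> x i < x (Suc i))"
      using n_chain n_last B_iff[of i] unfolding x by (cases "i = r") auto
  qed
  with n_PiE j show "x \<in> Sset_upto N (Suc r) m B"
    unfolding x J_def by (auto simp: Sset_upto_def Sset_def PiE_iff extensional_def)
qed

lemma inj_on_fun_upd_Sset_upto: "inj_on (\<lambda>(j, n). n(Suc r := j)) (SIGMA j:J. Sset_upto N r j A)"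
proof (rule inj_onI, clarsimp)
  fix j n j' n'
  assume "n \<in> Sset_upto N r j A" "n' \<in> Sset_upto N r j' A" and eq: "n(Suc r := j) = n'(Suc r := j')"
  then have "n \<in> extensional {1..r}" "n' \<in> extensional {1..r}"
    by (auto simp: Sset_upto_def Sset_def PiE_def)
  then have "n (Suc r) = n' (Suc r)" by (simp add: extensional_def)
  with eq have "n = n'" by (metis fun_upd_triv fun_upd_upd)
  with fun_cong[OF eq, of "Suc r"] show "j = j' \<and> n = n'" by simp
qed

lemma sum_Sset_upto_Suc:
  assumes "B - {Suc r} = A" "B \<subseteq> {1..Suc r}"
  shows "(\<Sum>n\<in>Sset_upto N (Suc r) m B. F n) =
    (\<Sum>j | j \<in> {1..N-1} \<and> (Suc r \<in> B \<longrightarrow> j \<le> m) \<and> (Suc r \<notin> B \<longrightarrow> j < m).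
       \<Sum>n\<in>Sset_upto N r j A. F (n(Suc r := j)))"
  (is "_ = (\<Sum>j\<in>?J. _)")
proof -
  have "(\<Sum>n\<in>Sset_upto N (Suc r) m B. F n)
      = (\<Sum>n\<in>(\<lambda>(j, n). n(Suc r := j)) ` (SIGMA j:?J. Sset_upto N r j A). F n)"
    using Sset_upto_Suc[OF assms] by simp
  also have "\<dots> = (\<Sum>(j, n)\<in>(SIGMA j:?J. Sset_upto N r j A). F (n(Suc r := j)))"
    by (subst sum.reindex[OF inj_on_fun_upd_Sset_upto]) (auto intro: sum.cong)
  also have "\<dots> = (\<Sum>j\<in>?J. \<Sum>n\<in>Sset_upto N r j A. F (n(Suc r := j)))"
    by (rule sum.Sigma[symmetric]) (auto simp: finite_Sset_upto)
  finally show ?thesis .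
qed

lemma zetaD_term_snoc:
  assumes "A \<subseteq> {1..length ks}"
  shows "zetaD_term N (ks @ [k]) A (n(Suc (length ks) := j)) = 1 / of_nat j ^ k * zetaD_term N ks A n"
proof -
  let ?r = "length ks"
  have "{1..length (ks @ [k])} - A = insert (Suc ?r) ({1..?r} - A)" using assms by auto
  moreover have "(\<Prod>i\<in>{1..?r} - A. 1 / rat_of_nat ((n(Suc ?r := j)) i) ^ ((ks @ [k]) ! (i - 1)))
      = (\<Prod>i\<in>{1..?r} - A. 1 / of_nat (n i) ^ (ks ! (i - 1)))"
    by (rule prod.cong) (auto simp: nth_append)
  moreover have "(\<Prod>i\<in>A. 1 / rat_of_nat (N - (n(Suc ?r := j)) i)) = (\<Prod>i\<in>A. 1 / of_nat (N - n i))"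
    by (rule prod.cong) (use assms in auto)
  ultimately show ?thesis by (simp add: zetaD_term_def)
qed

lemma zetaD_term_snoc_insert:
  assumes "A \<subseteq> {1..length ks}"
  shows "zetaD_term N (ks @ [k]) (insert (Suc (length ks)) A) (n(Suc (length ks) := j))
     = 1 / of_nat (N - j) * zetaD_term N ks A n"
proof -
  let ?r = "length ks"
  have "Suc ?r \<notin> A" "finite A" using assms finite_subset by auto
  moreover have "{1..length (ks @ [k])} - insert (Suc ?r) A = {1..?r} - A" by auto
  moreover have "(\<Prod>i\<in>{1..?r} - A. 1 / rat_of_nat ((n(Suc ?r := j)) i) ^ ((ks @ [k]) ! (i - 1)))
      = (\<Prod>i\<in>{1..?r} - A. 1 / of_nat (n i) ^ (ks ! (i - 1)))"
    by (rule prod.cong) (auto simp: nth_append)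
  moreover have "(\<Prod>i\<in>A. 1 / rat_of_nat (N - (n(Suc ?r := j)) i)) = (\<Prod>i\<in>A. 1 / of_nat (N - n i))"
    by (rule prod.cong) (use assms in auto)
  ultimately show ?thesis by (simp add: zetaD_term_def)
qed

lemma zetaD_upto_part_snoc:
  assumes "A \<subseteq> {1..length ks}" "m \<le> N"
  shows "zetaD_upto_part N (ks @ [k]) A m = (\<Sum>j\<in>{1..<m}. 1 / of_nat j ^ k * zetaD_upto_part N ks A j)"
proof -
  have "{j. j \<in> {1..N-1} \<and> (Suc (length ks) \<in> A \<longrightarrow> j \<le> m) \<and> (Suc (length ks) \<notin> A \<longrightarrow> j < m)} = {1..<m}"
    using assms by auto
  moreover have "A - {Suc (length ks)} = A" "A \<subseteq> {1..Suc (length ks)}" using assms(1) by auto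
  ultimately show ?thesis
    unfolding zetaD_upto_part_def
    by (simp add: sum_Sset_upto_Suc zetaD_term_snoc[OF assms(1)] sum_distrib_left)
qed

lemma zetaD_upto_part_snoc_insert:
  assumes "A \<subseteq> {1..length ks}"
  shows "zetaD_upto_part N (ks @ [k]) (insert (Suc (length ks)) A) m
     = (\<Sum>j\<in>{1..min m (N-1)}. 1 / of_nat (N - j) * zetaD_upto_part N ks A j)"
proof -
  have "{j. j \<in> {1..N-1} \<and> j \<le> m} = {1..min m (N-1)}" by auto
  moreover have "insert (Suc (length ks)) A - {Suc (length ks)} = A"
    "insert (Suc (length ks)) A \<subseteq> {1..Suc (length ks)}" using assms by auto
  ultimately show ?thesis
    unfolding zetaD_upto_part_def
    by (simp add: sum_Sset_upto_Suc zetaD_term_snoc_insert[OF assms] sum_distrib_left)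
qed

lemma sum_Pow_insert:
  assumes "finite A" "x \<notin> A"
  shows "(\<Sum>X\<in>Pow (insert x A). f X) = (\<Sum>X\<in>Pow A. f X) + (\<Sum>X\<in>Pow A. f (insert x X))"
proof -
  have "(\<Sum>X\<in>Pow (insert x A). f X) = (\<Sum>X\<in>Pow A. f X) + (\<Sum>X\<in>insert x ` Pow A. f X)"
    unfolding Pow_insert by (rule sum.union_disjoint) (use assms in auto)
  also have "(\<Sum>X\<in>insert x ` Pow A. f X) = (\<Sum>X\<in>Pow A. f (insert x X))"
    by (rule sum.reindex_cong[where l="insert x"]) (use assms in \<open>auto intro!: inj_onI\<close>)
  finally show ?thesis .
qed

lemma zetaD_upto_snoc:
  assumes "m \<le> N"
  shows "zetaD_upto N (ks @ [k]) m = iter_sum N k (zetaD_upto N ks) m"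
proof -
  let ?r = "length ks"
  define I where "I = {i \<in> {1..?r}. ks ! (i - 1) = 1}"
  have I_sub: "A \<subseteq> {1..?r}" if "A \<in> Pow I" for A using that unfolding I_def by auto
  have upto_I: "zetaD_upto N ks j = (\<Sum>A\<in>Pow I. zetaD_upto_part N ks A j)" for j
    unfolding zetaD_upto_def I_def ..
  have ones_snoc: "{i \<in> {1..length (ks @ [k])}. (ks @ [k]) ! (i - 1) = 1}
      = (if k = 1 then insert (Suc ?r) I else I)"
    unfolding I_def by (auto simp: nth_append)
  have lower: "(\<Sum>A\<in>Pow I. zetaD_upto_part N (ks @ [k]) A m)
      = (\<Sum>j\<in>{1..<m}. 1 / of_nat j ^ k * zetaD_upto N ks j)"
  proof -
    have "(\<Sum>A\<in>Pow I. zetaD_upto_part N (ks @ [k]) A m)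
        = (\<Sum>A\<in>Pow I. \<Sum>j\<in>{1..<m}. 1 / of_nat j ^ k * zetaD_upto_part N ks A j)"
      using zetaD_upto_part_snoc[OF I_sub assms] by simp
    also have "\<dots> = (\<Sum>j\<in>{1..<m}. 1 / of_nat j ^ k * (\<Sum>A\<in>Pow I. zetaD_upto_part N ks A j))"
      unfolding sum_distrib_left by (rule sum.swap)
    finally show ?thesis unfolding upto_I .
  qed
  show ?thesis
  proof (cases "k = 1")
    case False
    with lower ones_snoc show ?thesis by (simp add: zetaD_upto_def iter_sum_def)
  next
    case True
    have "(\<Sum>A\<in>Pow I. zetaD_upto_part N (ks @ [k]) (insert (Suc ?r) A) m)
        = (\<Sum>A\<in>Pow I. \<Sum>j\<in>{1..min m (N-1)}. 1 / of_nat (N - j) * zetaD_upto_part N ks A j)"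
      using zetaD_upto_part_snoc_insert[OF I_sub] by simp
    also have "\<dots> = (\<Sum>j\<in>{1..min m (N-1)}. 1 / of_nat (N - j) * (\<Sum>A\<in>Pow I. zetaD_upto_part N ks A j))"
      unfolding sum_distrib_left by (rule sum.swap)
    finally have upper: "(\<Sum>A\<in>Pow I. zetaD_upto_part N (ks @ [k]) (insert (Suc ?r) A) m)
        = (\<Sum>j\<in>{1..min m (N-1)}. 1 / of_nat (N - j) * zetaD_upto N ks j)"
      unfolding upto_I .
    have "finite I" "Suc ?r \<notin> I" unfolding I_def by auto
    with lower upper ones_snoc True show ?thesis
      by (simp add: zetaD_upto_def iter_sum_def sum_Pow_insert)
  qed
qed

lemma zetaD_upto_Nil: "zetaD_upto N [] m = 1"
  by (simp add: zetaD_upto_def zetaD_upto_part_def Sset_upto_def Sset_def zetaD_term_def)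

lemma zetaD_upto_eq_trunc: "m \<le> N \<Longrightarrow> zetaD_upto N ks m = zetaD_trunc N (rev ks) m"
proof (induction ks arbitrary: m rule: rev_induct)
  case (snoc k ks)
  have "zetaD_upto N (ks @ [k]) m = iter_sum N k (zetaD_upto N ks) m"
    using snoc.prems by (rule zetaD_upto_snoc)
  also have "\<dots> = iter_sum N k (zetaD_trunc N (rev ks)) m"
    by (rule iter_sum_cong) (use snoc in auto)
  finally show ?case by simp
qed (simp add: zetaD_upto_Nil)

lemma zetaD_N_eq_trunc: "zetaD_N ks N = zetaD_trunc N (rev ks) N"
proof -
  have "n r < N" if "n \<in> Sset r N A" "0 < r" for n r A
  proof -
    have "n r \<in> {1..N-1}" using that by (intro PiE_mem[of n "{1..r}"]) (auto simp: Sset_def)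
    then show ?thesis by auto
  qed
  then have "Sset_upto N (length ks) N A = Sset (length ks) N A" for A
    by (fastforce simp: Sset_upto_def)
  then have "zetaD_N ks N = zetaD_upto N ks N"
    by (simp add: zetaD_N_def zetaD_upto_def zetaD_upto_part_def zetaD_term_def Let_def)
  then show ?thesis by (simp add: zetaD_upto_eq_trunc)
qed

section \<open>Words and their indices\<close>

lemma idx_word_Nil [simp]: "idx_word [] = []"
  by (simp add: idx_word_def)

lemma idx_word_Cons [simp]: "idx_word (k # ks) = ek k @ idx_word ks"
  by (simp add: idx_word_def)

lemma idx_word_append [simp]: "idx_word (xs @ ys) = idx_word xs @ idx_word ys"
  by (simp add: idx_word_def)

definition starts_Y :: "hword \<Rightarrow> bool" where
  "starts_Y w \<longleftrightarrow> w = [] \<or> (\<exists>u. w = Y # u)"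

lemma starts_Y_idx_word: "starts_Y (idx_word ks)"
  by (cases ks) (auto simp: starts_Y_def ek_def)

lemma replicate_X_append_eq:
  "starts_Y u \<Longrightarrow> starts_Y v \<Longrightarrow> replicate a X @ u = replicate b X @ v \<Longrightarrow> a = b \<and> u = v"
  by (induction a arbitrary: b; case_tac b) (auto simp: starts_Y_def)

lemma idx_word_inject:
  "\<forall>k\<in>set ks. 0 < k \<Longrightarrow> \<forall>k\<in>set ks'. 0 < k \<Longrightarrow> idx_word ks = idx_word ks' \<Longrightarrow> ks = ks'"
proof (induction ks arbitrary: ks')
  case Nil
  then show ?case by (cases ks') (auto simp: ek_def)
next
  case (Cons k ks)
  then obtain k' ks'' where ks': "ks' = k' # ks''" by (cases ks') (auto simp: ek_def)
  with Cons.prems have "replicate (k - 1) X @ idx_word ks = replicate (k' - 1) X @ idx_word ks''"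
    by (simp add: ek_def)
  from replicate_X_append_eq[OF starts_Y_idx_word starts_Y_idx_word this]
  have "k - 1 = k' - 1" "idx_word ks = idx_word ks''" by auto
  with Cons.IH[of ks''] Cons.prems ks' show ?case by auto
qed

lemma idx_word_surj: "starts_Y w \<Longrightarrow> \<exists>ks. (\<forall>k\<in>set ks. 0 < k) \<and> idx_word ks = w"
proof (induction "length w" arbitrary: w rule: less_induct)
  case less
  show ?case
  proof (cases w)
    case Nil
    then show ?thesis by (intro exI[of _ "[]"]) simp
  next
    case (Cons l u)
    with less.prems have w: "w = Y # u" by (simp add: starts_Y_def)
    define j where "j = length (takeWhile (\<lambda>x. x = X) u)"
    define rest where "rest = dropWhile (\<lambda>x. x = X) u"
    have "takeWhile (\<lambda>x. x = X) u = replicate j X"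
      unfolding j_def by (rule replicate_length_same[symmetric]) (auto dest: set_takeWhileD)
    then have u: "u = replicate j X @ rest"
      using takeWhile_dropWhile_id[of "\<lambda>x. x = X" u] rest_def by simp
    have "starts_Y rest"
    proof (cases rest)
      case (Cons a r)
      then have "a \<noteq> X" using hd_dropWhile[of "\<lambda>x. x = X" u] rest_def by auto
      with Cons show ?thesis by (cases a) (auto simp: starts_Y_def)
    qed (simp add: starts_Y_def)
    moreover have "length rest < length w" using w u by simp
    ultimately obtain ks where "\<forall>k\<in>set ks. 0 < k" "idx_word ks = rest" using less.hyps by blast
    with w u show ?thesis by (intro exI[of _ "Suc j # ks"]) (auto simp: ek_def)
  qed
qed

lemma widx_idx_word: "\<forall>k\<in>set ks. 0 < k \<Longrightarrow> widx (idx_word ks) = ks"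
  unfolding widx_def by (rule the_equality) (auto intro: idx_word_inject)

lemma widx_pos_and_idx_word:
  assumes "starts_Y w"
  shows "(\<forall>k\<in>set (widx w). 0 < k) \<and> idx_word (widx w) = w"
  using idx_word_surj[OF assms] widx_idx_word by metis

lemma widx_Nil: "widx [] = []"
  using widx_idx_word[of "[]"] by simp

lemma Zword_eq_trunc: "Zword w N = zetaD_trunc N (rev (widx w)) N"
  by (simp add: Zword_def zetaD_def widx_Nil zetaD_N_eq_trunc)

text \<open>Words in the letters x and yx, i.e. the words of \<^const>\<open>H2\<close> without the leading yx.\<close>
fun in_x_yx :: "hword \<Rightarrow> bool" where
  "in_x_yx [] = True"
| "in_x_yx (X # w) = in_x_yx w"
| "in_x_yx (Y # X # w) = in_x_yx w"
| "in_x_yx [Y] = False"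
| "in_x_yx (Y # Y # w) = False"

lemma in_x_yx_concat: "\<forall>u\<in>set us. u = [X] \<or> u = [Y, X] \<Longrightarrow> in_x_yx (concat us)"
  by (induction us) auto

lemma in_x_yx_replicate_X_append: "in_x_yx (replicate n X @ w) = in_x_yx w"
  by (induction n) auto

lemma in_x_yx_idx_word_ge2:
  "\<forall>k\<in>set ks. 0 < k \<Longrightarrow> in_x_yx (idx_word ks) \<Longrightarrow> \<forall>k\<in>set ks. 2 \<le> k"
proof (induction ks)
  case (Cons k ks)
  show ?case
  proof (cases "k = 1")
    case True
    with Cons.prems have "in_x_yx (Y # idx_word ks)" by (simp add: ek_def)
    with starts_Y_idx_word[of ks] show ?thesis by (auto simp: starts_Y_def)
  next
    case False
    with Cons.prems have "2 \<le> k" by auto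
    then have "ek k = Y # X # replicate (k - 2) X"
      by (simp add: ek_def Suc_diff_Suc[symmetric] numeral_2_eq_2)
    with Cons \<open>2 \<le> k\<close> show ?thesis by (simp add: in_x_yx_replicate_X_append)
  qed
qed simp

lemma H2_word:
  assumes "f \<in> H2" "v \<in> supp f"
  shows "starts_Y v \<and> in_x_yx v"
  using assms in_x_yx_concat by (auto simp: H2_def starts_Y_def)

section \<open>Linear extension of functions on words\<close>

definition lin_ext :: "(hword \<Rightarrow> rat) \<Rightarrow> helem \<Rightarrow> rat" where
  "lin_ext G f = (\<Sum>w\<in>supp f. f w * G w)"

lemma lin_ext_superset: "finite S \<Longrightarrow> supp f \<subseteq> S \<Longrightarrow> lin_ext G f = (\<Sum>w\<in>S. f w * G w)"
  unfolding lin_ext_def by (rule sum.mono_neutral_left) (auto simp: supp_def)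

lemma lin_ext_delta: "lin_ext G (delta w) = G w"
proof -
  have "supp (delta w) = {w}" by (auto simp: supp_def delta_def)
  then show ?thesis by (simp add: lin_ext_def delta_def)
qed

lemma rmul_append: "rmul f u (v @ u) = f v"
  by (auto simp: rmul_def)

lemma supp_rmul: "supp (rmul f u) = (\<lambda>v. v @ u) ` supp f"
  by (auto simp: supp_def rmul_def rmul_append split: if_splits)

lemma lin_ext_rmul: "finite (supp f) \<Longrightarrow> lin_ext G (rmul f u) = lin_ext (\<lambda>v. G (v @ u)) f"
  unfolding lin_ext_def supp_rmul by (subst sum.reindex) (auto simp: inj_on_def rmul_append)

lemma lin_ext_add3:
  assumes "finite (supp f)" "finite (supp g)" "finite (supp h)"
  shows "lin_ext G (\<lambda>w. f w + g w + h w) = lin_ext G f + lin_ext G g + lin_ext G h"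
proof -
  let ?S = "supp f \<union> supp g \<union> supp h"
  have fin: "finite ?S" using assms by simp
  have "lin_ext G (\<lambda>w. f w + g w + h w) = (\<Sum>w\<in>?S. (f w + g w + h w) * G w)"
    by (rule lin_ext_superset[OF fin]) (auto simp: supp_def)
  also have "\<dots> = (\<Sum>w\<in>?S. f w * G w) + (\<Sum>w\<in>?S. g w * G w) + (\<Sum>w\<in>?S. h w * G w)"
    by (simp add: sum.distrib distrib_right)
  also have "\<dots> = lin_ext G f + lin_ext G g + lin_ext G h"
  proof -
    have "supp f \<subseteq> ?S" "supp g \<subseteq> ?S" "supp h \<subseteq> ?S" by auto
    from this[THEN lin_ext_superset[OF fin]] show ?thesis by simp
  qed
  finally show ?thesis .
qed

lemma finite_supp_hrev: "finite (supp (hrev a b))"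
proof (induction a b rule: hrev.induct)
  case (3 k1 a k2 b)
  have "supp (hrev (k1 # a) (k2 # b)) \<subseteq> supp (rmul (hrev a (k2 # b)) (ek k1))
      \<union> supp (rmul (hrev (k1 # a) b) (ek k2)) \<union> supp (rmul (hrev a b) (ek (k1 + k2)))"
    by (auto simp: supp_def)
  with 3 show ?case by (auto simp: supp_rmul intro: finite_subset)
qed (auto simp: supp_def delta_def)

lemma lin_ext_hrev: "lin_ext G (hrev a b) = sum_list (map (\<lambda>c. G (idx_word (rev c))) (stuffle a b))"
proof (induction a b arbitrary: G rule: hrev.induct)
  case (3 k1 a k2 b)
  have "lin_ext G (hrev (k1 # a) (k2 # b)) = lin_ext (\<lambda>v. G (v @ ek k1)) (hrev a (k2 # b))
      + lin_ext (\<lambda>v. G (v @ ek k2)) (hrev (k1 # a) b) + lin_ext (\<lambda>v. G (v @ ek (k1 + k2))) (hrev a b)"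
    by (simp only: hrev.simps lin_ext_add3 supp_rmul finite_imageI finite_supp_hrev lin_ext_rmul)
  then show ?case by (simp add: 3 o_def)
qed (simp_all add: lin_ext_delta)

lemma lin_ext_harm:
  assumes "finite (supp f)" "finite (supp g)"
  shows "lin_ext G (harm f g)
     = (\<Sum>u\<in>supp f. \<Sum>v\<in>supp g. f u * g v * lin_ext G (hrev (rev (widx u)) (rev (widx v))))"
proof -
  define H where "H u v = hrev (rev (widx u)) (rev (widx v))" for u v
  define S where "S = (\<Union>u\<in>supp f. \<Union>v\<in>supp g. supp (H u v))"
  have "finite S" unfolding S_def H_def using assms finite_supp_hrev by auto
  have H_sub: "supp (H u v) \<subseteq> S" if "u \<in> supp f" "v \<in> supp g" for u v
    unfolding S_def using that by blast
  have harm_eq: "harm f g = (\<lambda>w. \<Sum>u\<in>supp f. \<Sum>v\<in>supp g. f u * g v * H u v w)"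
    by (simp add: harm_def H_def)
  have "supp (harm f g) \<subseteq> S"
    unfolding harm_eq S_def supp_def by (force intro: sum.neutral)
  then have "lin_ext G (harm f g) = (\<Sum>w\<in>S. \<Sum>u\<in>supp f. \<Sum>v\<in>supp g. f u * g v * (H u v w * G w))"
    using \<open>finite S\<close> by (simp add: lin_ext_superset harm_eq sum_distrib_right mult.assoc)
  also have "\<dots> = (\<Sum>u\<in>supp f. \<Sum>v\<in>supp g. f u * g v * (\<Sum>w\<in>S. H u v w * G w))"
    by (simp add: sum.swap[of _ S] sum_distrib_left)
  also have "\<dots> = (\<Sum>u\<in>supp f. \<Sum>v\<in>supp g. f u * g v * lin_ext G (H u v))"
    using lin_ext_superset[OF \<open>finite S\<close> H_sub] by simp
  finally show ?thesis unfolding H_def .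
qed

section \<open>Multiplicativity\<close>

lemma Zword_hrev:
  assumes "starts_Y u" "starts_Y v" "in_x_yx v"
  shows "lin_ext (\<lambda>w. Zword w N) (hrev (rev (widx u)) (rev (widx v))) = Zword u N * Zword v N"
proof -
  let ?a = "rev (widx u)" and ?b = "rev (widx v)"
  have a_pos: "\<forall>k\<in>set ?a. 0 < k" and b_pos: "\<forall>k\<in>set ?b. 0 < k"
    using widx_pos_and_idx_word assms(1,2) by auto
  have b_ge2: "\<forall>k\<in>set ?b. 2 \<le> k"
    using widx_pos_and_idx_word[OF assms(2)] assms(3) in_x_yx_idx_word_ge2 by auto
  have "Zword (idx_word (rev c)) N = zetaD_trunc N c N" if "c \<in> set (stuffle ?a ?b)" for c
    using stuffle_pos[OF a_pos b_pos] that by (simp add: Zword_eq_trunc widx_idx_word)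
  then have "lin_ext (\<lambda>w. Zword w N) (hrev ?a ?b) = sum_list (map (\<lambda>c. zetaD_trunc N c N) (stuffle ?a ?b))"
    by (simp add: lin_ext_hrev cong: map_cong)
  also have "\<dots> = zetaD_trunc N ?a N * zetaD_trunc N ?b N"
    by (rule zetaD_trunc_stuffle[OF b_ge2])
  finally show ?thesis by (simp add: Zword_eq_trunc)
qed

lemma ZD_harm:
  assumes "w1 \<in> H1" "w2 \<in> H2"
  shows "ZD (harm w1 w2) N = ZD w1 N * ZD w2 N"
proof -
  have fin: "finite (supp w1)" "finite (supp w2)"
    using assms by (simp_all add: H1_def H2_def Hset_def)
  have "starts_Y u" if "u \<in> supp w1" for u
    using assms(1) that by (auto simp: H1_def starts_Y_def)
  then have "ZD (harm w1 w2) N = (\<Sum>u\<in>supp w1. \<Sum>v\<in>supp w2. w1 u * w2 v * (Zword u N * Zword v N))"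
    using lin_ext_harm[OF fin] H2_word[OF assms(2)] Zword_hrev
    by (simp add: ZD_def lin_ext_def[symmetric])
  also have "\<dots> = ZD w1 N * ZD w2 N"
    by (simp add: ZD_def sum_product algebra_simps)
  finally show ?thesis .
qed

theorem mainTheorem10:
  assumes "w1 \<in> H0" and "w2 \<in> H2" and "(N::nat) \<ge> 1"
  shows "ZD (harm w1 w2) N = ZD w1 N * ZD w2 N"
proof (rule ZD_harm)
  show "w1 \<in> H1" using assms(1) by (auto simp: H0_def H1_def)
qed (fact assms(2))

end
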